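(* Let $\boldsymbol\varphi$ be a random variable whose distribution is determined by a parameter $\theta\in\Theta\subseteq\mathbb{R}$, and let $I_{\boldsymbol\varphi}$ denote the support of $\boldsymbol\varphi$. Let $\mathbb{F}(\cdot,\cdot)$ and $\mathbb{G}(\cdot,\cdot)$ be bivariate functions such that: (i) for each $z\in I_{\boldsymbol\varphi}$, $\mathbb{F}(z,\vartheta)$ is non-increasing in $\vartheta\ge z$; (ii) for each $z\in I_{\boldsymbol\varphi}$, $\mathbb{G}(z,\vartheta)$ is non-decreasing in $\vartheta\le z$; (iii) $\Pr\{\boldsymbol\varphi\le z\mid\theta\}\le\mathbb{F}(z,\theta)$ for $z$ no greater than $\theta\in\Theta$, and $\Pr\{\boldsymbol\varphi\ge z\mid\theta\}\le\mathbb{G}(z,\theta)$ for $z$ no less than $\theta\in\Theta$. Let $\delta\in(0,1)$, and let $L(\boldsymbol\varphi,\delta)$ and $U(\boldsymbol\varphi,\delta)$ be functions of $\boldsymbol\varphi$ and $\delta$ such that the event $$\Big\{\mathbb{F}(\boldsymbol\varphi,U(\boldsymbol\varphi,\delta))\le\tfrac\delta2,\ \mathbb{G}(\boldsymbol\varphi,L(\boldsymbol\varphi,\delta))\le\tfrac\delta2,\ L(\boldsymbol\varphi,\delta)\le\boldsymbol\varphi\le U(\boldsymbol\varphi,\delta)\Big\}$$ is a sure event. Then $\Pr\{L(\boldsymbol\varphi,\delta)\le\theta\le U(\boldsymbol\varphi,\delta)\mid\theta\}\ge1-\delta$ for every $\theta\in\Theta$.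
   Context: $\Pr\{\cdot\mid\theta\}$ denotes probability when the distribution of $\boldsymbol\varphi$ has parameter $\theta$. *)

theory Defs
  imports "HOL-Probability.Probability"
begin

end

theory Submission
  imports Defs
begin

text \<open>
  If \<open>\<theta>\<close> lies above \<open>U(\<phi>)\<close>, then \<open>\<phi> \<le> \<theta>\<close> and, by monotonicity, \<open>F(\<phi>, \<theta>) \<le> \<delta>/2\<close>; the
  values of \<open>\<phi>\<close> with this property form a lower tail whose probability under \<open>\<theta>\<close> is
  at most \<open>\<delta>/2\<close>, by the bound \<open>Pr{\<phi> \<le> z | \<theta>} \<le> F(z, \<theta>)\<close> applied at the supremum of
  that tail (or, if the supremum is not attained, along values approaching it).
  Symmetrically, \<open>\<theta> < L(\<phi>)\<close> forces \<open>\<phi>\<close> into an upper tail of probability at most \<open>\<delta>/2\<close>,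
  and a union bound gives coverage at least \<open>1 - \<delta>\<close>.
\<close>

lemma (in finite_measure) measure_less_le_of_measure_le_below:
  fixes X :: "'a \<Rightarrow> real"
  assumes X: "X \<in> borel_measurable M"
    and le: "\<And>t. t < s \<Longrightarrow> measure M {\<omega> \<in> space M. X \<omega> \<le> t} \<le> c"
  shows "measure M {\<omega> \<in> space M. X \<omega> < s} \<le> c"
proof -
  define B where "B n = {\<omega> \<in> space M. X \<omega> \<le> s - 1 / Suc n}" for n
  have B_sets: "range B \<subseteq> sets M"
    using X by (auto simp: B_def)
  have "incseq B" unfolding B_def
    by (intro monoI) (auto simp: frac_le elim!: order_trans intro!: divide_left_mono)
  then have "(\<lambda>n. measure M (B n)) \<longlonglongrightarrow> measure M (\<Union>n. B n)"
    using B_sets by (rule finite_Lim_measure_incseq[rotated])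
  moreover have "measure M (B n) \<le> c" for n
    unfolding B_def by (rule le) simp
  ultimately have "measure M (\<Union>n. B n) \<le> c"
    by (intro LIMSEQ_le_const2) auto
  moreover have "(\<Union>n. B n) = {\<omega> \<in> space M. X \<omega> < s}"
  proof safe
    fix \<omega> assume "\<omega> \<in> space M" "X \<omega> < s"
    then obtain n where "1 / Suc n < s - X \<omega>"
      using reals_Archimedean[of "s - X \<omega>"] by (auto simp: inverse_eq_divide)
    with \<open>\<omega> \<in> space M\<close> show "\<omega> \<in> (\<Union>n. B n)"
      unfolding B_def by (intro UN_I[of n]) auto
  next
    fix \<omega> n assume "\<omega> \<in> B n"
    then have "\<omega> \<in> space M" "X \<omega> \<le> s - 1 / Suc n"
      unfolding B_def by auto
    moreover have "0 < 1 / real (Suc n)" by simp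
    ultimately show "X \<omega> < s" "\<omega> \<in> space M" by linarith+
  qed
  ultimately show ?thesis by simp
qed

lemma (in finite_measure) lower_tail_event_le:
  fixes X :: "'a \<Rightarrow> real" and H :: "real \<Rightarrow> real"
  assumes "0 \<le> c" and X: "X \<in> borel_measurable M"
    and bound: "\<And>z. z \<le> \<theta> \<Longrightarrow> measure M {\<omega> \<in> space M. X \<omega> \<le> z} \<le> H z"
  shows "\<exists>A \<in> sets M. measure M A \<le> c \<and> {\<omega> \<in> space M. X \<omega> \<le> \<theta> \<and> H (X \<omega>) \<le> c} \<subseteq> A"
proof -
  define S where "S = {X \<omega> | \<omega>. \<omega> \<in> space M \<and> X \<omega> \<le> \<theta> \<and> H (X \<omega>) \<le> c}"
  have S_le: "z \<le> \<theta>" "measure M {\<omega> \<in> space M. X \<omega> \<le> z} \<le> c" if "z \<in> S" for z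
    using that bound[of z] by (auto simp: S_def)
  show ?thesis
  proof (cases "S = {}")
    case True
    then show ?thesis
      using \<open>0 \<le> c\<close> by (intro bexI[of _ "{}"]) (auto simp: S_def)
  next
    case False
    have "bdd_above S"
      by (intro bdd_aboveI[of _ \<theta>]) (auto simp: S_def)
    define s where "s = Sup S"
    have upper: "\<And>z. z \<in> S \<Longrightarrow> z \<le> s"
      unfolding s_def using \<open>bdd_above S\<close> by (simp add: cSup_upper)
    show ?thesis
    proof (cases "s \<in> S")
      case True
      show ?thesis
        using S_le[OF True] upper X
        by (intro bexI[of _ "{\<omega> \<in> space M. X \<omega> \<le> s}"]) (auto simp: S_def)
    next
      case s_notin: False
      have "measure M {\<omega> \<in> space M. X \<omega> < s} \<le> c"
      proof (rule measure_less_le_of_measure_le_below[OF X])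
        fix t assume "t < s"
        then obtain z where "z \<in> S" "t < z"
          using \<open>S \<noteq> {}\<close> \<open>bdd_above S\<close> by (auto simp: s_def less_cSup_iff)
        have "measure M {\<omega> \<in> space M. X \<omega> \<le> t} \<le> measure M {\<omega> \<in> space M. X \<omega> \<le> z}"
          using X \<open>t < z\<close> by (intro finite_measure_mono) auto
        also have "\<dots> \<le> c" using S_le[OF \<open>z \<in> S\<close>] by simp
        finally show "measure M {\<omega> \<in> space M. X \<omega> \<le> t} \<le> c" .
      qed
      moreover have "{\<omega> \<in> space M. X \<omega> \<le> \<theta> \<and> H (X \<omega>) \<le> c} \<subseteq> {\<omega> \<in> space M. X \<omega> < s}"
        using upper s_notin by (force simp: S_def order.order_iff_strict)
      ultimately show ?thesis
        using X by (intro bexI[of _ "{\<omega> \<in> space M. X \<omega> < s}"]) auto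
    qed
  qed
qed

lemma (in finite_measure) upper_tail_event_le:
  fixes X :: "'a \<Rightarrow> real" and H :: "real \<Rightarrow> real"
  assumes "0 \<le> c" and X: "X \<in> borel_measurable M"
    and bound: "\<And>z. \<theta> \<le> z \<Longrightarrow> measure M {\<omega> \<in> space M. X \<omega> \<ge> z} \<le> H z"
  shows "\<exists>B \<in> sets M. measure M B \<le> c \<and> {\<omega> \<in> space M. \<theta> \<le> X \<omega> \<and> H (X \<omega>) \<le> c} \<subseteq> B"
proof -
  have "measure M {\<omega> \<in> space M. - X \<omega> \<le> z} \<le> H (- z)" if "z \<le> - \<theta>" for z
    using bound[of "- z"] that by (simp add: minus_le_iff)
  moreover have "(\<lambda>\<omega>. - X \<omega>) \<in> borel_measurable M"
    using X by measurable
  ultimately show ?thesis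
    using lower_tail_event_le[OF \<open>0 \<le> c\<close>, of "\<lambda>\<omega>. - X \<omega>" "- \<theta>" "\<lambda>z. H (- z)"] by auto
qed

lemma outside_interval_imp_tail:
  fixes F G :: "real \<Rightarrow> real \<Rightarrow> real"
  assumes F_mono: "\<And>a b. z \<le> a \<Longrightarrow> a \<le> b \<Longrightarrow> F z b \<le> F z a"
    and G_mono: "\<And>a b. a \<le> b \<Longrightarrow> b \<le> z \<Longrightarrow> G z a \<le> G z b"
    and "F z u \<le> c" "G z l \<le> c" "l \<le> z" "z \<le> u"
  shows "l \<le> \<theta> \<and> \<theta> \<le> u \<or> z \<le> \<theta> \<and> F z \<theta> \<le> c \<or> \<theta> \<le> z \<and> G z \<theta> \<le> c"
proof (cases "u < \<theta>")
  case True
  then show ?thesis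
    using F_mono[of u \<theta>] assms(3,6) by auto
next
  case False
  then show ?thesis
    using G_mono[of \<theta> l] assms(4,5) by (cases "\<theta> < l") auto
qed

theorem theorem7:
  fixes M :: "real \<Rightarrow> 'a measure"
    and \<Omega> :: "'a set"
    and \<phi> :: "'a \<Rightarrow> real"
    and \<Theta> :: "real set"
    and F G :: "real \<Rightarrow> real \<Rightarrow> real"
    and L U :: "real \<Rightarrow> real \<Rightarrow> real"
    and \<delta> :: real
  assumes prob: "\<And>\<theta>. \<theta> \<in> \<Theta> \<Longrightarrow> prob_space (M \<theta>)"
    and space: "\<And>\<theta>. \<theta> \<in> \<Theta> \<Longrightarrow> space (M \<theta>) = \<Omega>"
    and meas: "\<And>\<theta>. \<theta> \<in> \<Theta> \<Longrightarrow> \<phi> \<in> borel_measurable (M \<theta>)"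
    and F_mono: "\<And>z a b. z \<in> \<phi> ` \<Omega> \<Longrightarrow> z \<le> a \<Longrightarrow> a \<le> b \<Longrightarrow> F z b \<le> F z a"
    and G_mono: "\<And>z a b. z \<in> \<phi> ` \<Omega> \<Longrightarrow> a \<le> b \<Longrightarrow> b \<le> z \<Longrightarrow> G z a \<le> G z b"
    and F_bound: "\<And>\<theta> z. \<theta> \<in> \<Theta> \<Longrightarrow> z \<le> \<theta> \<Longrightarrow>
                    measure (M \<theta>) {\<omega> \<in> \<Omega>. \<phi> \<omega> \<le> z} \<le> F z \<theta>"
    and G_bound: "\<And>\<theta> z. \<theta> \<in> \<Theta> \<Longrightarrow> \<theta> \<le> z \<Longrightarrow>
                    measure (M \<theta>) {\<omega> \<in> \<Omega>. \<phi> \<omega> \<ge> z} \<le> G z \<theta>"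
    and delta: "0 < \<delta>" "\<delta> < 1"
    and sure: "\<And>\<omega>. \<omega> \<in> \<Omega> \<Longrightarrow>
                 F (\<phi> \<omega>) (U (\<phi> \<omega>) \<delta>) \<le> \<delta> / 2 \<and>
                 G (\<phi> \<omega>) (L (\<phi> \<omega>) \<delta>) \<le> \<delta> / 2 \<and>
                 L (\<phi> \<omega>) \<delta> \<le> \<phi> \<omega> \<and> \<phi> \<omega> \<le> U (\<phi> \<omega>) \<delta>"
    and event_meas: "\<And>\<theta>. \<theta> \<in> \<Theta> \<Longrightarrow>
                 {\<omega> \<in> \<Omega>. L (\<phi> \<omega>) \<delta> \<le> \<theta> \<and> \<theta> \<le> U (\<phi> \<omega>) \<delta>} \<in> sets (M \<theta>)"
  shows "\<forall>\<theta>\<in>\<Theta>. measure (M \<theta>) {\<omega> \<in> \<Omega>. L (\<phi> \<omega>) \<delta> \<le> \<theta> \<and> \<theta> \<le> U (\<phi> \<omega>) \<delta>} \<ge> 1 - \<delta>"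
proof
  fix \<theta> assume "\<theta> \<in> \<Theta>"
  interpret prob_space "M \<theta>" by (rule prob[OF \<open>\<theta> \<in> \<Theta>\<close>])
  define E where "E = {\<omega> \<in> \<Omega>. L (\<phi> \<omega>) \<delta> \<le> \<theta> \<and> \<theta> \<le> U (\<phi> \<omega>) \<delta>}"
  have "0 \<le> \<delta> / 2" using delta by simp
  obtain A where A: "A \<in> sets (M \<theta>)" "measure (M \<theta>) A \<le> \<delta> / 2"
      "{\<omega> \<in> \<Omega>. \<phi> \<omega> \<le> \<theta> \<and> F (\<phi> \<omega>) \<theta> \<le> \<delta> / 2} \<subseteq> A"
    using lower_tail_event_le[OF \<open>0 \<le> \<delta> / 2\<close> meas[OF \<open>\<theta> \<in> \<Theta>\<close>], of \<theta> "\<lambda>z. F z \<theta>"]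
      F_bound space \<open>\<theta> \<in> \<Theta>\<close> by auto
  obtain B where B: "B \<in> sets (M \<theta>)" "measure (M \<theta>) B \<le> \<delta> / 2"
      "{\<omega> \<in> \<Omega>. \<theta> \<le> \<phi> \<omega> \<and> G (\<phi> \<omega>) \<theta> \<le> \<delta> / 2} \<subseteq> B"
    using upper_tail_event_le[OF \<open>0 \<le> \<delta> / 2\<close> meas[OF \<open>\<theta> \<in> \<Theta>\<close>], of \<theta> "\<lambda>z. G z \<theta>"]
      G_bound space \<open>\<theta> \<in> \<Theta>\<close> by auto
  have "\<Omega> \<subseteq> E \<union> A \<union> B"
  proof
    fix \<omega> assume "\<omega> \<in> \<Omega>"
    then show "\<omega> \<in> E \<union> A \<union> B"
      using outside_interval_imp_tail[of "\<phi> \<omega>" F G "U (\<phi> \<omega>) \<delta>" "\<delta> / 2" "L (\<phi> \<omega>) \<delta>" \<theta>]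
        F_mono G_mono sure A(3) B(3) unfolding E_def by blast
  qed
  then have "1 \<le> measure (M \<theta>) (E \<union> A \<union> B)"
    using space[OF \<open>\<theta> \<in> \<Theta>\<close>] event_meas[OF \<open>\<theta> \<in> \<Theta>\<close>] A(1) B(1) prob_space
    by (metis E_def finite_measure_mono sets.Un)
  also have "\<dots> \<le> measure (M \<theta>) E + measure (M \<theta>) A + measure (M \<theta>) B"
    using event_meas[OF \<open>\<theta> \<in> \<Theta>\<close>] A(1) B(1) measure_Un_le
    unfolding E_def by (smt (verit) sets.Un)
  finally show "1 - \<delta> \<le> measure (M \<theta>) E"
    using A(2) B(2) by linarith
qed

end
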